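(* Let $s=0$ and $\lambda\in\mathbb{C}$. Every odd superderivation of $\mathfrak{L}^0_\lambda$ of degree $0$ is inner; more precisely, it equals $\mathrm{ad}(aG_0+bH_0)$ for some $a,b\in\mathbb{C}$.
   Context: For $s\in\{0,\tfrac12\}$ and $\lambda\in\mathbb{C}$, $\mathfrak{L}^s_\lambda$ is the complex Lie superalgebra with basis $\{L_m,I_m,G_p,H_p : m\in\mathbb{Z},\ p\in s+\mathbb{Z}\}$, even part spanned by the $L_m,I_m$, odd part spanned by the $G_p,H_p$, and brackets $[L_m,L_n]=(m-n)L_{m+n}$, $[L_m,I_n]=(m-n)I_{m+n}$, $[L_m,H_p]=(\tfrac m2-p)H_{m+p}$, $[L_m,G_p]=(\tfrac m2-p)G_{m+p}+\lambda(m+1)H_{m+p}$, $[I_m,G_p]=(m-2p)H_{m+p}$, $[G_p,G_q]=I_{p+q}$, plus those given by super-antisymmetry $[y,x]=-(-1)^{|x||y|}[x,y]$; all other brackets of basis elements are zero. $\mathfrak{L}_r$ is spanned by basis elements of index $r$. A superderivation of parity $a$ is a linear map $D$ shifting parity by $a$ with $D([x,y])=[D(x),y]+(-1)^{a|x|}[x,D(y)]$ for homogeneous $x,y$; it has degree $r$ if $D(\mathfrak{L}_q)\subset\mathfrak{L}_{q+r}$. $\mathrm{ad}\,x(y)=[x,y]$. *)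

theory Defs
  imports Complex_Main
begin

text \<open>Basis of the Lie superalgebra L^s_lambda for s = 0: all indices are integers.\<close>
datatype basis = L int | I int | G int | H int

type_synonym elem = "basis \<Rightarrow> complex"

definition supp :: "elem \<Rightarrow> basis set" where
  "supp x = {b. x b \<noteq> 0}"

definition Alg :: "elem set" where
  "Alg = {x. finite (supp x)}"

definition e :: "basis \<Rightarrow> elem" where
  "e b = (\<lambda>c. if c = b then 1 else 0)"

definition idx :: "basis \<Rightarrow> int" where
  "idx b = (case b of L m \<Rightarrow> m | I m \<Rightarrow> m | G p \<Rightarrow> p | H p \<Rightarrow> p)"

definition is_odd_basis :: "basis \<Rightarrow> bool" where
  "is_odd_basis b = (case b of L _ \<Rightarrow> False | I _ \<Rightarrow> False | G _ \<Rightarrow> True | H _ \<Rightarrow> True)"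

text \<open>Bracket of basis elements (including those given by super-antisymmetry).\<close>
fun br0 :: "complex \<Rightarrow> basis \<Rightarrow> basis \<Rightarrow> elem" where
  "br0 lam (L m) (L n) = (\<lambda>c. of_int (m - n) * e (L (m + n)) c)"
| "br0 lam (L m) (I n) = (\<lambda>c. of_int (m - n) * e (I (m + n)) c)"
| "br0 lam (I n) (L m) = (\<lambda>c. - of_int (m - n) * e (I (m + n)) c)"
| "br0 lam (L m) (H p) = (\<lambda>c. (of_int m / 2 - of_int p) * e (H (m + p)) c)"
| "br0 lam (H p) (L m) = (\<lambda>c. - (of_int m / 2 - of_int p) * e (H (m + p)) c)"
| "br0 lam (L m) (G p) = (\<lambda>c. (of_int m / 2 - of_int p) * e (G (m + p)) c
                              + lam * of_int (m + 1) * e (H (m + p)) c)"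
| "br0 lam (G p) (L m) = (\<lambda>c. - ((of_int m / 2 - of_int p) * e (G (m + p)) c
                              + lam * of_int (m + 1) * e (H (m + p)) c))"
| "br0 lam (I m) (G p) = (\<lambda>c. of_int (m - 2 * p) * e (H (m + p)) c)"
| "br0 lam (G p) (I m) = (\<lambda>c. - of_int (m - 2 * p) * e (H (m + p)) c)"
| "br0 lam (G p) (G q) = e (I (p + q))"
| "br0 lam _ _ = (\<lambda>c. 0)"

definition brk :: "complex \<Rightarrow> elem \<Rightarrow> elem \<Rightarrow> elem" where
  "brk lam x y = (\<lambda>c. \<Sum>a\<in>supp x. \<Sum>b\<in>supp y. x a * y b * br0 lam a b c)"

definition is_even_elem :: "elem \<Rightarrow> bool" where
  "is_even_elem x \<longleftrightarrow> (\<forall>b\<in>supp x. \<not> is_odd_basis b)"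

definition is_odd_elem :: "elem \<Rightarrow> bool" where
  "is_odd_elem x \<longleftrightarrow> (\<forall>b\<in>supp x. is_odd_basis b)"

definition in_degree :: "int \<Rightarrow> elem \<Rightarrow> bool" where
  "in_degree q x \<longleftrightarrow> (\<forall>b\<in>supp x. idx b = q)"

definition linear_on_Alg :: "(elem \<Rightarrow> elem) \<Rightarrow> bool" where
  "linear_on_Alg D \<longleftrightarrow> (\<forall>x\<in>Alg. D x \<in> Alg) \<and>
     (\<forall>x\<in>Alg. \<forall>y\<in>Alg. D (\<lambda>c. x c + y c) = (\<lambda>c. D x c + D y c)) \<and>
     (\<forall>x\<in>Alg. \<forall>k::complex. D (\<lambda>c. k * x c) = (\<lambda>c. k * D x c))"

definition odd_superderivation :: "complex \<Rightarrow> (elem \<Rightarrow> elem) \<Rightarrow> bool" where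
  "odd_superderivation lam D \<longleftrightarrow> linear_on_Alg D \<and>
     (\<forall>x\<in>Alg. is_even_elem x \<longrightarrow> is_odd_elem (D x)) \<and>
     (\<forall>x\<in>Alg. is_odd_elem x \<longrightarrow> is_even_elem (D x)) \<and>
     (\<forall>x\<in>Alg. \<forall>y\<in>Alg. (is_even_elem x \<or> is_odd_elem x) \<longrightarrow> (is_even_elem y \<or> is_odd_elem y) \<longrightarrow>
        (is_even_elem x \<longrightarrow> D (brk lam x y) = (\<lambda>c. brk lam (D x) y c + brk lam x (D y) c)) \<and>
        (is_odd_elem x \<longrightarrow> D (brk lam x y) = (\<lambda>c. brk lam (D x) y c - brk lam x (D y) c)))"

definition has_degree :: "int \<Rightarrow> (elem \<Rightarrow> elem) \<Rightarrow> bool" where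
  "has_degree r D \<longleftrightarrow> (\<forall>q. \<forall>x\<in>Alg. in_degree q x \<longrightarrow> in_degree (q + r) (D x))"

end

theory Submission
  imports Defs
begin

text \<open>Since \<open>D\<close> is odd and of degree 0, \<open>D(e a)\<close> is a combination of the two basis vectors of the
  same index as \<open>a\<close> and opposite parity, so \<open>D\<close> is described by eight coefficient sequences.
  Taking coordinates in the superderivation rule on pairs of basis vectors yields linear relations
  among them: four sequences vanish, the \<open>I\<close>-coefficient of \<open>D(G\<^sub>m)\<close> is a constant \<open>a\<close>, two
  more are multiples of \<open>m a\<close>, and the \<open>H\<close>-coefficient of \<open>D(L\<^sub>m)\<close>, once the contribution of
  \<open>ad(a G\<^sub>0)\<close> is removed, satisfies the functional equation
  \<open>(m - n) f(m + n) = (m/2 - n) f(n) - (n/2 - m) f(m)\<close>, whose solutions are linear in \<open>m\<close>.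
  The resulting values are those of \<open>ad(a G\<^sub>0 + b H\<^sub>0)\<close>, and both maps are linear, so they agree
  on all finitely supported elements.\<close>

context
  fixes f :: "int \<Rightarrow> 'a::field_char_0"
  assumes witt_eq: "\<And>m n. of_int (m - n) * f (m + n)
                     = (of_int m / 2 - of_int n) * f n - (of_int n / 2 - of_int m) * f m"
begin

lemma witt_solution_zero: "f 0 = 0"
  using witt_eq[of 1 0] by simp

lemma witt_solution_odd: "f (- k) = - f k"
proof (cases "k = 0")
  case True
  then show ?thesis
    using witt_solution_zero by simp
next
  case False
  have "(f (- k) + f k) * (3 * of_int k / 2) = 0"
    using witt_eq[of k "- k"] witt_solution_zero by (simp add: field_simps)
  with False show ?thesis
    by (simp add: add_eq_0_iff)
qed

lemma witt_solution_two: "f 2 = 2 * f 1"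
proof -
  have f3: "f 3 = 3 / 2 * f 2"
    using witt_eq[of 2 1] by (simp add: field_simps)
  have "(f 2 - 2 * f 1) * (5 / 4) = 0"
    using witt_eq[of 3 "-1"] f3 witt_solution_odd[of 1] by (simp add: field_simps)
  then show ?thesis
    by simp
qed

lemma witt_solution_nat: "f (int n) = of_nat n * f 1"
proof (induction n rule: nat_less_induct)
  case (1 n)
  show ?case
  proof (cases "n \<le> 2")
    case True
    then consider "n = 0" | "n = 1" | "n = 2"
      by linarith
    then show ?thesis
      using witt_solution_zero witt_solution_two by cases auto
  next
    case False
    then obtain k where k: "n = Suc k" "k \<ge> 2"
      by (cases n) auto
    have "f (int k) = of_nat k * f 1"
      using "1.IH" k by simp
    then have "(f (int k + 1) - (of_nat k + 1) * f 1) * (of_nat k - 1) * 4 = 0"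
      using witt_eq[of "int k" 1] by (simp add: field_simps)
    moreover have "(of_nat k - 1 :: 'a) \<noteq> 0"
      using k by (simp add: right_minus_eq)
    ultimately show ?thesis
      using k by (simp add: add.commute)
  qed
qed

lemma witt_solution_linear: "f m = of_int m * f 1"
proof (cases "m \<ge> 0")
  case True
  then show ?thesis
    using witt_solution_nat[of "nat m"] by simp
next
  case False
  then show ?thesis
    using witt_solution_nat[of "nat (- m)"] witt_solution_odd[of "- m"] by simp
qed

end

text \<open>These reduce a consequence of known linear identities to a polynomial identity,
  which \<open>field_simps\<close> can check once the multipliers are supplied.\<close>

lemma eq_if_difference_multiple: "(x - y :: 'a::ring) = c * (x' - y') \<Longrightarrow> x' = y' \<Longrightarrow> x = y"
  by simp

lemma eq_if_difference_combination:
  "(x - y :: 'a::ring) = c * (x1 - y1) + d * (x2 - y2) \<Longrightarrow> x1 = y1 \<Longrightarrow> x2 = y2 \<Longrightarrow> x = y"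
  by simp

lemma supp_e [simp]: "supp (e b) = {b}"
  by (auto simp: supp_def e_def)

lemma e_in_Alg [simp]: "e b \<in> Alg"
  by (simp add: Alg_def)

lemma e_apply: "e b c = (if c = b then 1 else 0)"
  by (simp add: e_def)

lemma lincomb_in_Alg: "x \<in> Alg \<Longrightarrow> y \<in> Alg \<Longrightarrow> (\<lambda>c. u * x c + v * y c) \<in> Alg"
  unfolding Alg_def mem_Collect_eq
  by (rule finite_subset[of _ "supp x \<union> supp y"]) (auto simp: supp_def)

lemma brk_eq_sum_over:
  assumes "finite S" "finite T" "supp x \<subseteq> S" "supp y \<subseteq> T"
  shows "brk lam x y c = (\<Sum>a\<in>S. \<Sum>b\<in>T. x a * y b * br0 lam a b c)"
proof -
  have "brk lam x y c = (\<Sum>a\<in>supp x. \<Sum>b\<in>T. x a * y b * br0 lam a b c)"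
    unfolding brk_def
    by (intro sum.cong refl sum.mono_neutral_left) (use assms in \<open>auto simp: supp_def\<close>)
  also have "\<dots> = (\<Sum>a\<in>S. \<Sum>b\<in>T. x a * y b * br0 lam a b c)"
    by (rule sum.mono_neutral_left) (use assms in \<open>auto simp: supp_def\<close>)
  finally show ?thesis .
qed

lemma brk_e_e [simp]: "brk lam (e a) (e b) = br0 lam a b"
  unfolding brk_def supp_e by (simp add: e_def)

lemma brk_lincomb_left:
  assumes "x \<in> Alg" "x' \<in> Alg" "y \<in> Alg"
  shows "brk lam (\<lambda>c. u * x c + v * x' c) y = (\<lambda>c. u * brk lam x y c + v * brk lam x' y c)"
proof
  fix c
  let ?S = "supp x \<union> supp x'"
  have fin: "finite ?S" "finite (supp y)"
    using assms by (auto simp: Alg_def)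
  have "supp (\<lambda>c. u * x c + v * x' c) \<subseteq> ?S"
    by (auto simp: supp_def)
  then show "brk lam (\<lambda>c. u * x c + v * x' c) y c = u * brk lam x y c + v * brk lam x' y c"
    using brk_eq_sum_over[OF fin _ subset_refl]
    by (simp add: sum_distrib_left sum.distrib algebra_simps)
qed

lemma brk_lincomb_right:
  assumes "x \<in> Alg" "y \<in> Alg" "y' \<in> Alg"
  shows "brk lam x (\<lambda>c. u * y c + v * y' c) = (\<lambda>c. u * brk lam x y c + v * brk lam x y' c)"
proof
  fix c
  let ?T = "supp y \<union> supp y'"
  have fin: "finite (supp x)" "finite ?T"
    using assms by (auto simp: Alg_def)
  have "supp (\<lambda>c. u * y c + v * y' c) \<subseteq> ?T"
    by (auto simp: supp_def)
  then show "brk lam x (\<lambda>c. u * y c + v * y' c) c = u * brk lam x y c + v * brk lam x y' c"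
    using brk_eq_sum_over[OF fin subset_refl]
    by (simp add: sum_distrib_left sum.distrib algebra_simps)
qed

lemma linear_maps_eq_on_Alg:
  assumes F: "\<And>x y u v. x \<in> Alg \<Longrightarrow> y \<in> Alg \<Longrightarrow>
                F (\<lambda>c. u * x c + v * y c) = (\<lambda>c. u * F x c + v * F y c)"
    and F': "\<And>x y u v. x \<in> Alg \<Longrightarrow> y \<in> Alg \<Longrightarrow>
                F' (\<lambda>c. u * x c + v * y c) = (\<lambda>c. u * F' x c + v * F' y c)"
    and basis: "\<And>b. F (e b) = F' (e b)"
    and x: "x \<in> Alg"
  shows "F x = F' x"
proof -
  have "F x = F' x" if "finite S" "supp x \<subseteq> S" for S x
    using that
  proof (induction S arbitrary: x rule: finite_induct)
    case empty
    then have "x = (\<lambda>c. 0 * e (L 0) c + 0 * e (L 0) c)"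
      by (auto simp: supp_def)
    then show ?case
      using F[of "e (L 0)" "e (L 0)" 0 0] F'[of "e (L 0)" "e (L 0)" 0 0] by simp
  next
    case (insert b S)
    define x' where "x' = x(b := 0)"
    have supp_x': "supp x' \<subseteq> S"
      using insert.prems by (auto simp: x'_def supp_def)
    then have "x' \<in> Alg"
      using insert.hyps(1) finite_subset unfolding Alg_def by blast
    moreover have "x = (\<lambda>c. 1 * x' c + x b * e b c)"
      by (rule ext) (simp add: x'_def e_apply)
    ultimately show ?case
      using F[of x' "e b" 1 "x b"] F'[of x' "e b" 1 "x b"] insert.IH[OF supp_x'] basis
      by simp
  qed
  then show ?thesis
    using x by (simp add: Alg_def)
qed

lemma is_even_elem_e: "is_even_elem (e b) \<longleftrightarrow> \<not> is_odd_basis b"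
  by (simp add: is_even_elem_def)

lemma is_odd_elem_e: "is_odd_elem (e b) \<longleftrightarrow> is_odd_basis b"
  by (simp add: is_odd_elem_def)

locale odd_degree_zero_superderivation =
  fixes lam :: complex and D :: "elem \<Rightarrow> elem"
  assumes superderivation: "odd_superderivation lam D"
    and degree_zero: "has_degree 0 D"
begin

lemma D_lincomb:
  assumes "x \<in> Alg" "y \<in> Alg"
  shows "D (\<lambda>c. u * x c + v * y c) = (\<lambda>c. u * D x c + v * D y c)"
proof -
  have add: "D (\<lambda>c. x c + y c) = (\<lambda>c. D x c + D y c)" if "x \<in> Alg" "y \<in> Alg" for x y
    using superderivation that by (simp add: odd_superderivation_def linear_on_Alg_def)
  have scale: "D (\<lambda>c. k * z c) = (\<lambda>c. k * D z c)" if "z \<in> Alg" for z k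
    using superderivation that by (simp add: odd_superderivation_def linear_on_Alg_def)
  have "(\<lambda>c. k * z c) \<in> Alg" if "z \<in> Alg" for z k
    using lincomb_in_Alg[OF that that, of k 0] by simp
  then show ?thesis
    using add[of "\<lambda>c. u * x c" "\<lambda>c. v * y c"] scale assms by simp
qed

lemma D_br0:
  "D (br0 lam a b) = (\<lambda>c. brk lam (D (e a)) (e b) c
                        + (if is_odd_basis a then -1 else 1) * brk lam (e a) (D (e b)) c)"
proof -
  have "\<forall>x\<in>Alg. \<forall>y\<in>Alg. (is_even_elem x \<or> is_odd_elem x) \<longrightarrow>
        (is_even_elem y \<or> is_odd_elem y) \<longrightarrow>
        (is_even_elem x \<longrightarrow> D (brk lam x y) = (\<lambda>c. brk lam (D x) y c + brk lam x (D y) c)) \<and>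
        (is_odd_elem x \<longrightarrow> D (brk lam x y) = (\<lambda>c. brk lam (D x) y c - brk lam x (D y) c))"
    using superderivation unfolding odd_superderivation_def by blast
  from this[rule_format, of "e a" "e b"] show ?thesis
    by (cases "is_odd_basis a") (simp_all add: is_even_elem_e is_odd_elem_e)
qed

lemma D_e_vanishes:
  assumes "idx c \<noteq> idx a \<or> is_odd_basis c = is_odd_basis a"
  shows "D (e a) c = 0"
proof (rule ccontr)
  assume "D (e a) c \<noteq> 0"
  then have c: "c \<in> supp (D (e a))"
    by (simp add: supp_def)
  have "in_degree (idx a) (e a)"
    by (simp add: in_degree_def)
  then have "in_degree (idx a + 0) (D (e a))"
    using degree_zero e_in_Alg unfolding has_degree_def by blast
  then have "idx c = idx a"
    using c by (simp add: in_degree_def)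
  moreover have "is_odd_basis c \<noteq> is_odd_basis a"
  proof (cases "is_odd_basis a")
    case True
    then have "is_even_elem (D (e a))"
      using superderivation unfolding odd_superderivation_def by (simp add: is_odd_elem_e)
    then show ?thesis using c True by (simp add: is_even_elem_def)
  next
    case False
    then have "is_odd_elem (D (e a))"
      using superderivation unfolding odd_superderivation_def by (simp add: is_even_elem_e)
    then show ?thesis using c False by (simp add: is_odd_elem_def)
  qed
  ultimately show False
    using assms by simp
qed

definition Dcoef :: "basis \<Rightarrow> basis \<Rightarrow> complex" where
  "Dcoef a b = D (e a) b"

lemma D_e_L: "D (e (L m)) = (\<lambda>c. Dcoef (L m) (G m) * e (G m) c + Dcoef (L m) (H m) * e (H m) c)"
  by (rule ext)
     (auto simp: Dcoef_def e_apply idx_def is_odd_basis_def intro!: D_e_vanishes split: basis.splits)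

lemma D_e_I: "D (e (I m)) = (\<lambda>c. Dcoef (I m) (G m) * e (G m) c + Dcoef (I m) (H m) * e (H m) c)"
  by (rule ext)
     (auto simp: Dcoef_def e_apply idx_def is_odd_basis_def intro!: D_e_vanishes split: basis.splits)

lemma D_e_G: "D (e (G m)) = (\<lambda>c. Dcoef (G m) (L m) * e (L m) c + Dcoef (G m) (I m) * e (I m) c)"
  by (rule ext)
     (auto simp: Dcoef_def e_apply idx_def is_odd_basis_def intro!: D_e_vanishes split: basis.splits)

lemma D_e_H: "D (e (H m)) = (\<lambda>c. Dcoef (H m) (L m) * e (L m) c + Dcoef (H m) (I m) * e (I m) c)"
  by (rule ext)
     (auto simp: Dcoef_def e_apply idx_def is_odd_basis_def intro!: D_e_vanishes split: basis.splits)

lemma D_scale_e: "D (\<lambda>c. k * e b c) = (\<lambda>c. k * D (e b) c)"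
  using D_lincomb[of "e b" "e b" k 0] by simp

lemma D_zero: "D (\<lambda>c. 0) = (\<lambda>c. 0)"
  using D_scale_e[of 0] by simp

lemmas brk_e_lincomb =
  brk_lincomb_left[OF e_in_Alg e_in_Alg e_in_Alg] brk_lincomb_right[OF e_in_Alg e_in_Alg e_in_Alg]

lemmas D_br0_expand =
  D_zero D_scale_e D_lincomb[OF e_in_Alg e_in_Alg] D_e_L D_e_I D_e_G D_e_H brk_e_lincomb

text \<open>\<open>D_XY_at_Z\<close> is the \<open>Z\<close>-coordinate of the superderivation rule for \<open>[X\<^sub>m, Y\<^sub>n]\<close>.\<close>

lemma D_LL_at_H:
  "of_int (m - n) * Dcoef (L (m + n)) (H (m + n))
     = lam * of_int (m + 1) * Dcoef (L n) (G n) + (of_int m / 2 - of_int n) * Dcoef (L n) (H n)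
       - lam * of_int (n + 1) * Dcoef (L m) (G m) - (of_int n / 2 - of_int m) * Dcoef (L m) (H m)"
  using fun_cong[OF D_br0[of "L m" "L n"], of "H (m+n)"]
  by (simp add: D_br0_expand is_odd_basis_def)
     (simp add: e_apply algebra_simps)

lemma D_LG_at_I:
  "(of_int m / 2 - of_int p) * Dcoef (G (m + p)) (I (m + p))
       + lam * of_int (m + 1) * Dcoef (H (m + p)) (I (m + p))
     = Dcoef (L m) (G m) + of_int (m - p) * Dcoef (G p) (I p)"
  using fun_cong[OF D_br0[of "L m" "G p"], of "I (m + p)"]
  by (simp add: D_br0_expand is_odd_basis_def)
     (simp add: e_apply algebra_simps)

lemma D_GG_at_H:
  "Dcoef (I (p + q)) (H (p + q))
     = lam * of_int (p + 1) * Dcoef (G p) (L p) + of_int (p - 2 * q) * Dcoef (G p) (I p)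
       + lam * of_int (q + 1) * Dcoef (G q) (L q) + of_int (q - 2 * p) * Dcoef (G q) (I q)"
  using fun_cong[OF D_br0[of "G p" "G q"], of "H (p + q)"]
  by (simp add: D_br0_expand is_odd_basis_def)
     (simp add: e_apply algebra_simps)

lemma D_GH_at_H:
  "(of_int p / 2 - of_int q) * Dcoef (G p) (L p) + lam * of_int (q + 1) * Dcoef (H q) (L q)
     + of_int (q - 2 * p) * Dcoef (H q) (I q) = 0"
  using fun_cong[OF D_br0[of "G p" "H q"], of "H (p + q)"]
  by (simp add: D_br0_expand is_odd_basis_def)
     (simp add: e_apply algebra_simps)

lemma D_IG_at_L: "of_int (m - 2 * p) * Dcoef (H (m + p)) (L (m + p)) = 0"
  using fun_cong[OF D_br0[of "I m" "G p"], of "L (m + p)"]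
  by (simp add: D_br0_expand is_odd_basis_def)
     (auto simp: e_apply algebra_simps)

lemma D_IG_at_I:
  "of_int (m - 2 * p) * Dcoef (H (m + p)) (I (m + p)) = Dcoef (I m) (G m) + of_int (m - p) * Dcoef (G p) (L p)"
  using fun_cong[OF D_br0[of "I m" "G p"], of "I (m + p)"]
  by (simp add: D_br0_expand is_odd_basis_def)
     (simp add: e_apply algebra_simps)

lemma D_II_at_H: "of_int (m - 2 * n) * Dcoef (I n) (G n) = of_int (n - 2 * m) * Dcoef (I m) (G m)"
  using fun_cong[OF D_br0[of "I m" "I n"], of "H (m + n)"]
  by (simp add: D_br0_expand is_odd_basis_def)
     (simp add: e_apply algebra_simps)

lemma Dcoef_H_L: "Dcoef (H k) (L k) = 0"
  using D_IG_at_L[of k 0] D_IG_at_L[of 1 "-1"] by (cases "k = 0") auto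

lemma Dcoef_I_G: "Dcoef (I k) (G k) = 0"
proof -
  have "Dcoef (I 2) (G 2) = 0"
    using D_II_at_H[of 1 2] by simp
  then have "Dcoef (I 0) (G 0) = 0"
    using D_II_at_H[of 0 2] by simp
  then show ?thesis
    using D_II_at_H[of 0 k] by (cases "k = 0") auto
qed

lemma Dcoef_H_I_G_L_nonzero:
  assumes "p \<noteq> 0"
  shows "Dcoef (H p) (I p) = 0" and "Dcoef (G p) (L p) = 0"
proof -
  have "of_int p * (2 * Dcoef (H p) (I p) - Dcoef (G p) (L p)) = 0"
    using D_IG_at_I[of 0 p] Dcoef_I_G[of 0] by (simp add: algebra_simps)
  moreover have "of_int p * (2 * Dcoef (H p) (I p) + Dcoef (G p) (L p)) = 0"
    by (rule eq_if_difference_multiple[where c = "-2", OF _ D_GH_at_H[of p p]])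
       (simp add: Dcoef_H_L field_simps)
  ultimately show "Dcoef (H p) (I p) = 0" "Dcoef (G p) (L p) = 0"
    using assms by auto
qed

lemma Dcoef_H_I: "Dcoef (H k) (I k) = 0" and Dcoef_G_L: "Dcoef (G k) (L k) = 0"
proof -
  have "Dcoef (H 0) (I 0) = 0"
    using D_IG_at_I[of 1 "-1"] Dcoef_I_G Dcoef_H_I_G_L_nonzero[of "-1"] by simp
  moreover have "Dcoef (G 0) (L 0) = 0"
    using D_IG_at_I[of 1 0] Dcoef_I_G Dcoef_H_I_G_L_nonzero[of 1] by simp
  ultimately show "Dcoef (H k) (I k) = 0" "Dcoef (G k) (L k) = 0"
    using Dcoef_H_I_G_L_nonzero[of k] by (cases "k = 0"; simp)+
qed

definition ad_G :: complex where
  "ad_G = Dcoef (G 0) (I 0)"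

lemma Dcoef_G_I: "Dcoef (G m) (I m) = ad_G"
proof (cases "m = 0")
  case False
  have "Dcoef (I 0) (H 0) = 0"
    using D_GG_at_H[of 0 0] Dcoef_G_L by simp
  then have "of_int (3 * m) * (Dcoef (G m) (I m) - Dcoef (G (- m)) (I (- m))) = 0"
    using D_GG_at_H[of m "- m"] Dcoef_G_L by (auto simp: algebra_simps)
  then have sym: "Dcoef (G (- m)) (I (- m)) = Dcoef (G m) (I m)"
    using False by auto
  have "of_int m * Dcoef (G m) (I m) = of_int m * Dcoef (G 0) (I 0)"
    by (rule eq_if_difference_combination[where c = "-2/5" and d = "2/5",
          OF _ D_LG_at_I[of m "- m"] D_LG_at_I[of m 0]])
       (simp add: Dcoef_H_I sym field_simps)
  then show ?thesis
    using False by (simp add: ad_G_def)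
qed (simp add: ad_G_def)

lemma Dcoef_L_G: "Dcoef (L m) (G m) = - of_int m * ad_G / 2"
  by (rule eq_if_difference_multiple[where c = "-1", OF _ D_LG_at_I[of m 0]])
     (simp add: Dcoef_H_I Dcoef_G_I field_simps)

lemma Dcoef_I_H: "Dcoef (I m) (H m) = - of_int m * ad_G"
  using D_GG_at_H[of m 0] Dcoef_G_L Dcoef_G_I by (simp add: algebra_simps)

definition ad_H :: complex where
  "ad_H = - 2 * (Dcoef (L 1) (H 1) + 2 * lam * ad_G)"

lemma Dcoef_L_H: "Dcoef (L m) (H m) = - of_int m * ad_H / 2 - lam * of_int (m + 1) * ad_G"
proof -
  \<comment> \<open>Removing the contribution of \<open>ad (ad_G G\<^sub>0)\<close> leaves a solution of \<open>witt_eq\<close>.\<close>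
  define f where "f k = Dcoef (L k) (H k) + lam * of_int (k + 1) * ad_G" for k
  have "of_int (m - n) * f (m + n) = (of_int m / 2 - of_int n) * f n - (of_int n / 2 - of_int m) * f m"
    for m n
    by (rule eq_if_difference_multiple[where c = 1, OF _ D_LL_at_H[of m n]])
       (simp add: f_def Dcoef_L_G field_simps)
  then have f_linear: "f m = of_int m * f 1"
    by (rule witt_solution_linear)
  show ?thesis
    by (rule eq_if_difference_multiple[where c = 1, OF _ f_linear])
       (simp add: f_def ad_H_def field_simps)
qed

lemma D_e_eq_ad: "D (e b) = brk lam (\<lambda>c. ad_G * e (G 0) c + ad_H * e (H 0) c) (e b)"
proof -
  have "brk lam (\<lambda>c. ad_G * e (G 0) c + ad_H * e (H 0) c) (e b)
          = (\<lambda>c. ad_G * br0 lam (G 0) b c + ad_H * br0 lam (H 0) b c)"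
    by (simp add: brk_e_lincomb)
  moreover have "D (e b) c = ad_G * br0 lam (G 0) b c + ad_H * br0 lam (H 0) b c" for c
    by (cases b)
       (simp_all add: D_e_L D_e_I D_e_G D_e_H e_apply Dcoef_L_G Dcoef_L_H Dcoef_I_G Dcoef_I_H
          Dcoef_G_L Dcoef_G_I Dcoef_H_L Dcoef_H_I field_simps)
  ultimately show ?thesis
    by auto
qed

lemma D_eq_ad: "x \<in> Alg \<Longrightarrow> D x = brk lam (\<lambda>c. ad_G * e (G 0) c + ad_H * e (H 0) c) x"
  by (rule linear_maps_eq_on_Alg[OF D_lincomb brk_lincomb_right D_e_eq_ad])
     (simp_all add: lincomb_in_Alg)

end

theorem lemma2p5:
  fixes lam :: complex and D :: "elem \<Rightarrow> elem"
  assumes "odd_superderivation lam D"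
    and "has_degree 0 D"
  shows "\<exists>a b :: complex. \<forall>x\<in>Alg.
           D x = brk lam (\<lambda>c. a * e (G 0) c + b * e (H 0) c) x"
proof -
  interpret odd_degree_zero_superderivation lam D
    using assms by unfold_locales
  show ?thesis
    using D_eq_ad by blast
qed

end
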